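(* Let $H>0$, $\beta\in(0,1/2)$, $a>0$, $b>0$, $\eta\in(0,1]$, $D_0>0$, $R_0\ge0$ be constants. If $\eta<1$ let $\delta\in(0,\eta)$ and $\eta^-=\eta-\delta$; if $\eta=1$ let $\eta^-=1$. Then there exist constants $A,B>0$ depending only on $H,\beta,a,b,\eta^-,D_0,R_0$ such that the following holds for every $T>0$. Suppose $x^T,v^T:[0,\infty)\to\mathbb{R}^3$ satisfy \[\dot x^T=v^T(t),\qquad \dot v^T=-a_T(x^T,t)\,v^T(t)+\varepsilon_T(t),\qquad t\ge0,\] where the scalar coefficient satisfies $a_T(x,t)\ge H/(1+|x|^2)^{\beta}$, the perturbation $\varepsilon_T(t)\in\mathbb{R}^3$ satisfies $|\varepsilon_T(t)|\le a\,e^{-b(t+T)^{\eta}}$ for all $t\ge0$, and $|v^T(t)|\le D_0$ for all $t\ge0$ and $|x^T(0)|\le R_0+D_0T$. Then \[|v^T(T)|\le A\,e^{-B\,T^{\min(1-2\beta,\ \eta^-)}}.\] *)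

theory Defs
  imports "HOL-Analysis.Analysis"
begin

end

theory Submission
  imports Defs
begin

text \<open>
  Since \<open>|v| \<le> D0\<close>, up to time \<open>T\<close> the trajectory stays in the ball of radius \<open>R0 + 2 D0 T\<close>,
  where the damping coefficient is at least \<open>\<kappa> = H / (1 + (R0 + 2 D0 T)\<^sup>2)\<^sup>\<beta>\<close>; for \<open>T \<ge> 1\<close>
  this gives \<open>\<kappa> T \<ge> c T\<^bsup>1 - 2\<beta>\<^esup>\<close> with \<open>c = H / (1 + R0 + 2 D0)\<^bsup>2\<beta>\<^esup>\<close>.
  The weight \<open>e\<^bsup>2\<kappa>t\<^esup>\<close> absorbs the damping, so the weighted energy
  \<open>e\<^bsup>2\<kappa>t\<^esup> |v(t)|\<^sup>2\<close> grows on \<open>[0, T]\<close> at rate at most \<open>2 e\<^bsup>2\<kappa>T\<^esup> D0 sup |\<epsilon>|\<close>, whence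
  \<open>|v(T)|\<^sup>2 \<le> D0\<^sup>2 e\<^bsup>-2\<kappa>T\<^esup> + 2 D0 a T e\<^bsup>-b T\<^sup>\<eta>\<^esup>\<close>. Both terms are \<open>O(e\<^bsup>-2B T\<^sup>\<gamma>\<^esup>)\<close> for
  \<open>\<gamma> = min (1 - 2\<beta>) \<eta>m \<le> \<eta>\<close> and \<open>B = min c (b/4)\<close>, the second because
  \<open>T \<le> C e\<^bsup>(b/2) T\<^sup>\<eta>\<^esup>\<close> (from \<open>ln y \<le> y - 1\<close>). For \<open>T < 1\<close> the bound \<open>|v| \<le> D0\<close> suffices.
\<close>

lemma has_field_derivative_inner_self:
  fixes v :: "real \<Rightarrow> 'a::real_inner"
  assumes "(v has_vector_derivative w) (at t within S)"
  shows "((\<lambda>t. v t \<bullet> v t) has_field_derivative 2 * (v t \<bullet> w)) (at t within S)"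
proof -
  have "(v has_derivative (\<lambda>h. h *\<^sub>R w)) (at t within S)"
    using assms by (simp add: has_vector_derivative_def)
  from has_derivative_inner[OF this this]
  show ?thesis
    by (simp add: has_field_derivative_def inner_commute algebra_simps mult_commute_abs)
qed

lemma norm_le_of_bounded_vector_derivative:
  fixes x :: "real \<Rightarrow> 'a::real_normed_vector"
  assumes "t \<ge> 0"
    and "\<And>s. s \<in> {0..t} \<Longrightarrow> (x has_vector_derivative v s) (at s within {0..t})"
    and "\<And>s. s \<in> {0..t} \<Longrightarrow> norm (v s) \<le> D"
  shows "norm (x t) \<le> norm (x 0) + D * t"
proof -
  have "norm (x t - x 0) \<le> D * norm (t - 0)"
  proof (rule differentiable_bound[where f' = "\<lambda>s h. h *\<^sub>R v s" and S = "{0..t}"])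
    fix s assume "s \<in> {0..t}"
    then show "(x has_derivative (\<lambda>h. h *\<^sub>R v s)) (at s within {0..t})"
      and "onorm (\<lambda>h. h *\<^sub>R v s) \<le> D"
      using assms onorm_scaleR_left[OF bounded_linear_ident, of "v s"]
      by (auto simp: has_vector_derivative_def onorm_id)
  qed (use assms in auto)
  then show ?thesis
    using assms norm_triangle_sub[of "x t" "x 0"] by simp
qed

lemma damped_energy_bound:
  fixes v \<epsilon> :: "real \<Rightarrow> 'a::real_inner" and \<alpha> :: "real \<Rightarrow> real"
  assumes "T \<ge> 0" and "\<kappa> \<ge> 0"
    and deriv: "\<And>t. t \<in> {0..T} \<Longrightarrow>
      (v has_vector_derivative (- \<alpha> t *\<^sub>R v t + \<epsilon> t)) (at t within {0..T})"
    and damping: "\<And>t. t \<in> {0..T} \<Longrightarrow> \<alpha> t \<ge> \<kappa>"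
    and forcing: "\<And>t. t \<in> {0..T} \<Longrightarrow> norm (\<epsilon> t) \<le> E"
    and speed: "\<And>t. t \<in> {0..T} \<Longrightarrow> norm (v t) \<le> D"
  shows "(norm (v T))\<^sup>2 \<le> D\<^sup>2 * exp (-2*\<kappa>*T) + 2*D*E*T"
proof -
  define g where "g t = exp (2*\<kappa>*t) * (v t \<bullet> v t)" for t
  define g' where
    "g' t = exp (2*\<kappa>*t) * (2*\<kappa> * (v t \<bullet> v t) + 2 * (v t \<bullet> (- \<alpha> t *\<^sub>R v t + \<epsilon> t)))" for t
  have "D \<ge> 0" "E \<ge> 0"
    using speed[of 0] forcing[of 0] \<open>T \<ge> 0\<close> by (auto intro: order_trans[OF norm_ge_zero])
  have g_deriv: "(g has_derivative (\<lambda>h. h * g' t)) (at t within {0..T})" if "t \<in> {0..T}" for t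
  proof -
    have "(g has_field_derivative g' t) (at t within {0..T})"
      unfolding g_def g'_def
      by (auto intro!: derivative_eq_intros has_field_derivative_inner_self deriv that
          simp: algebra_simps)
    then show ?thesis
      by (simp add: has_field_derivative_def mult_commute_abs)
  qed
  have g'_le: "g' t \<le> exp (2*\<kappa>*T) * (2*D*E)" if t: "t \<in> {0..T}" for t
  proof -
    have "v t \<bullet> \<epsilon> t \<le> norm (v t) * norm (\<epsilon> t)"
      by (rule Cauchy_Schwarz_ineq2[THEN abs_le_D1])
    also have "\<dots> \<le> D * E"
      using speed[OF t] forcing[OF t] \<open>D \<ge> 0\<close> by (intro mult_mono) auto
    finally have "v t \<bullet> \<epsilon> t \<le> D * E" .
    moreover have "\<kappa> * (v t \<bullet> v t) \<le> \<alpha> t * (v t \<bullet> v t)"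
      using damping[OF t] by (intro mult_right_mono) auto
    ultimately have "g' t \<le> exp (2*\<kappa>*t) * (2*D*E)"
      unfolding g'_def by (intro mult_left_mono) (auto simp: inner_add_right inner_diff_right)
    also have "\<dots> \<le> exp (2*\<kappa>*T) * (2*D*E)"
      using t \<open>\<kappa> \<ge> 0\<close> \<open>D \<ge> 0\<close> \<open>E \<ge> 0\<close> by (intro mult_right_mono) (auto intro: mult_left_mono)
    finally show ?thesis .
  qed
  obtain z where "z \<in> {0..T}" and "g T - g 0 = T * g' z"
    using mvt_very_simple[of 0 T g "\<lambda>t h. h * g' t"] g_deriv \<open>T \<ge> 0\<close> by auto
  moreover have "T * g' z \<le> T * (exp (2*\<kappa>*T) * (2*D*E))"
    using g'_le[OF \<open>z \<in> {0..T}\<close>] \<open>T \<ge> 0\<close> by (rule mult_left_mono)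
  ultimately have "g T \<le> g 0 + T * (exp (2*\<kappa>*T) * (2*D*E))"
    by simp
  moreover have "g 0 \<le> D\<^sup>2"
    using speed[of 0] \<open>T \<ge> 0\<close> by (simp add: g_def power2_norm_eq_inner[symmetric] power_mono)
  ultimately have "exp (2*\<kappa>*T) * (norm (v T))\<^sup>2 \<le> D\<^sup>2 + T * (exp (2*\<kappa>*T) * (2*D*E))"
    by (simp add: g_def power2_norm_eq_inner)
  then have "(norm (v T))\<^sup>2 \<le> (D\<^sup>2 + T * (exp (2*\<kappa>*T) * (2*D*E))) / exp (2*\<kappa>*T)"
    by (simp add: field_simps)
  also have "\<dots> = D\<^sup>2 * exp (-2*\<kappa>*T) + 2*D*E*T"
    by (simp add: field_simps exp_minus[symmetric] exp_add[symmetric])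
  finally show ?thesis .
qed

lemma one_plus_sq_le_sq_mult:
  fixes R D T :: real
  assumes "R \<ge> 0" and "D \<ge> 0" and "T \<ge> 1"
  shows "1 + (R + D*T)\<^sup>2 \<le> ((1 + R + D) * T)\<^sup>2"
proof -
  have "1 + (R + D*T)\<^sup>2 \<le> (1 + R + D*T)\<^sup>2"
    using assms by (simp add: power2_eq_square algebra_simps)
  also have "\<dots> \<le> ((1 + R + D) * T)\<^sup>2"
  proof (rule power_mono)
    have "(1 + R) * 1 \<le> (1 + R) * T"
      using assms by (intro mult_left_mono) auto
    then show "1 + R + D*T \<le> (1 + R + D) * T"
      by (simp add: algebra_simps)
  qed (use assms in auto)
  finally show ?thesis .
qed

lemma damping_time_product_lower_bound:
  fixes H \<beta> R D T :: real
  assumes "H \<ge> 0" and "\<beta> \<ge> 0" and "R \<ge> 0" and "D \<ge> 0" and "T \<ge> 1"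
  shows "H / ((1 + R + D)\<^sup>2) powr \<beta> * T powr (1 - 2*\<beta>) \<le> H / (1 + (R + D*T)\<^sup>2) powr \<beta> * T"
proof -
  define K where "K = (1 + R + D)\<^sup>2"
  have "K > 0"
    using assms by (simp add: K_def add_pos_nonneg)
  have "(1 + (R + D*T)\<^sup>2) powr \<beta> \<le> (K * T\<^sup>2) powr \<beta>"
    using one_plus_sq_le_sq_mult[OF assms(3-5)] assms
    by (intro powr_mono2) (auto simp: K_def power_mult_distrib)
  also have "\<dots> = K powr \<beta> * T powr (2*\<beta>)"
  proof -
    have "T\<^sup>2 = T powr 2"
      using assms by (simp add: powr_realpow)
    then have "(T\<^sup>2) powr \<beta> = T powr (2*\<beta>)"
      by (simp add: powr_powr)
    then show ?thesis
      using \<open>K > 0\<close> assms by (simp add: powr_mult)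
  qed
  moreover have "0 < 1 + (R + D*T)\<^sup>2"
    by (simp add: add_pos_nonneg)
  ultimately have "H / (K powr \<beta> * T powr (2*\<beta>)) \<le> H / (1 + (R + D*T)\<^sup>2) powr \<beta>"
    using assms \<open>K > 0\<close> by (intro divide_left_mono) (auto intro!: mult_pos_pos)
  then have "H / (K powr \<beta> * T powr (2*\<beta>)) * T \<le> H / (1 + (R + D*T)\<^sup>2) powr \<beta> * T"
    using assms by (intro mult_right_mono) auto
  moreover have "H / (K powr \<beta> * T powr (2*\<beta>)) * T = H / K powr \<beta> * T powr (1 - 2*\<beta>)"
    using assms \<open>K > 0\<close> by (simp add: powr_diff)
  ultimately show ?thesis
    by (simp add: K_def)
qed

lemma le_exp_powr:
  fixes c \<eta> T :: real
  assumes "c > 0" and "\<eta> > 0" and "T > 0"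
  shows "T \<le> exp (- (1 + ln (c*\<eta>)) / \<eta>) * exp (c * T powr \<eta>)"
proof -
  define y where "y = c*\<eta> * T powr \<eta>"
  have "y > 0"
    using assms by (simp add: y_def)
  have "\<eta> * ln T = ln y - ln (c*\<eta>)"
    using assms unfolding y_def by (subst ln_mult) (auto simp: ln_powr)
  also have "\<dots> \<le> y - 1 - ln (c*\<eta>)"
    using ln_le_minus_one[OF \<open>y > 0\<close>] by linarith
  also have "\<dots> = \<eta> * (- (1 + ln (c*\<eta>)) / \<eta> + c * T powr \<eta>)"
    using assms by (simp add: y_def field_simps)
  finally have "ln T \<le> - (1 + ln (c*\<eta>)) / \<eta> + c * T powr \<eta>"
    using assms by (simp add: mult_le_cancel_left_pos)
  then have "T \<le> exp (- (1 + ln (c*\<eta>)) / \<eta> + c * T powr \<eta>)"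
    using assms by (metis exp_le_cancel_iff exp_ln)
  then show ?thesis
    by (simp only: exp_add)
qed

lemma exp_neg_powr_le:
  fixes B c \<gamma> \<rho> T :: real
  assumes "0 \<le> B" and "B \<le> c" and "\<gamma> \<le> \<rho>" and "T \<ge> 1"
  shows "exp (- c * T powr \<rho>) \<le> exp (- B * T powr \<gamma>)"
proof -
  have "B * T powr \<gamma> \<le> B * T powr \<rho>"
    using assms by (intro mult_left_mono powr_mono) auto
  also have "\<dots> \<le> c * T powr \<rho>"
    using assms by (intro mult_right_mono) auto
  finally show ?thesis
    by simp
qed

locale damped_motion =
  fixes H \<beta> a b \<eta> D0 R0 T :: real
    and x v \<epsilon> :: "real \<Rightarrow> 'a::real_inner" and aT :: "'a \<Rightarrow> real \<Rightarrow> real"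
  assumes T_pos: "T > 0" and H_nonneg: "H \<ge> 0" and \<beta>_nonneg: "\<beta> \<ge> 0"
    and a_nonneg: "a \<ge> 0" and b_pos: "b > 0" and \<eta>_pos: "\<eta> > 0" and R0_nonneg: "R0 \<ge> 0"
    and dx: "\<forall>t\<ge>0. (x has_vector_derivative v t) (at t within {0..})"
    and dv: "\<forall>t\<ge>0. (v has_vector_derivative (- (aT (x t) t) *\<^sub>R v t + \<epsilon> t)) (at t within {0..})"
    and damping: "\<forall>y t. t \<ge> 0 \<longrightarrow> aT y t \<ge> H / (1 + (norm y)\<^sup>2) powr \<beta>"
    and forcing: "\<forall>t\<ge>0. norm (\<epsilon> t) \<le> a * exp (- b * (t + T) powr \<eta>)"
    and speed: "\<forall>t\<ge>0. norm (v t) \<le> D0"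
    and start: "norm (x 0) \<le> R0 + D0 * T"
begin

lemma D0_nonneg: "D0 \<ge> 0"
  using speed by (auto intro: order_trans[OF norm_ge_zero])

lemma position_bound:
  assumes "t \<in> {0..T}"
  shows "norm (x t) \<le> R0 + 2*D0*T"
proof -
  have "norm (x t) \<le> norm (x 0) + D0 * t"
    using assms dx speed
    by (intro norm_le_of_bounded_vector_derivative)
      (auto intro: has_vector_derivative_within_subset)
  also have "\<dots> \<le> R0 + 2*D0*T"
    using assms start D0_nonneg mult_left_mono[of t T D0] by auto
  finally show ?thesis .
qed

lemma damping_lower_bound:
  assumes "t \<in> {0..T}"
  shows "H / (1 + (R0 + 2*D0*T)\<^sup>2) powr \<beta> \<le> aT (x t) t"
proof -
  have "(1 + (norm (x t))\<^sup>2) powr \<beta> \<le> (1 + (R0 + 2*D0*T)\<^sup>2) powr \<beta>"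
    using position_bound[OF assms] \<beta>_nonneg by (intro powr_mono2 add_left_mono power_mono) auto
  moreover have "0 < 1 + (norm (x t))\<^sup>2" "0 < 1 + (R0 + 2*D0*T)\<^sup>2"
    by (simp_all add: add_pos_nonneg)
  ultimately have "H / (1 + (R0 + 2*D0*T)\<^sup>2) powr \<beta> \<le> H / (1 + (norm (x t))\<^sup>2) powr \<beta>"
    using H_nonneg by (intro divide_left_mono) (auto intro!: mult_pos_pos)
  also have "\<dots> \<le> aT (x t) t"
    using damping assms by simp
  finally show ?thesis .
qed

lemma forcing_bound:
  assumes "t \<in> {0..T}"
  shows "norm (\<epsilon> t) \<le> a * exp (- b * T powr \<eta>)"
proof -
  have "exp (- b * (t + T) powr \<eta>) \<le> exp (- b * T powr \<eta>)"
    using assms b_pos \<eta>_pos T_pos by (simp add: mult_left_mono powr_mono2)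
  then show ?thesis
    using forcing assms a_nonneg by (meson atLeastAtMost_iff mult_left_mono order_trans)
qed

lemma energy_bound:
  "(norm (v T))\<^sup>2 \<le> D0\<^sup>2 * exp (-2 * (H / (1 + (R0 + 2*D0*T)\<^sup>2) powr \<beta>) * T)
    + 2*D0*a * (T * exp (- b * T powr \<eta>))"
proof -
  have "(norm (v T))\<^sup>2 \<le> D0\<^sup>2 * exp (-2 * (H / (1 + (R0 + 2*D0*T)\<^sup>2) powr \<beta>) * T)
    + 2 * D0 * (a * exp (- b * T powr \<eta>)) * T"
  proof (rule damped_energy_bound)
    fix t assume "t \<in> {0..T}"
    then show "(v has_vector_derivative (- aT (x t) t *\<^sub>R v t + \<epsilon> t)) (at t within {0..T})"
      and "norm (v t) \<le> D0"
      using dv speed by (auto intro: has_vector_derivative_within_subset)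
  qed (use T_pos H_nonneg damping_lower_bound forcing_bound in auto)
  then show ?thesis
    by (simp add: algebra_simps)
qed

lemma velocity_decay_large_time:
  assumes "T \<ge> 1" and "0 \<le> B" and "B \<le> H / ((1 + R0 + 2*D0)\<^sup>2) powr \<beta>" and "B \<le> b/4"
    and "\<gamma> \<le> 1 - 2*\<beta>" and "\<gamma> \<le> \<eta>"
  shows "norm (v T) \<le> sqrt (D0\<^sup>2 + 2*D0*a * exp (- (1 + ln (b*\<eta>/2)) / \<eta>)) * exp (- B * T powr \<gamma>)"
proof -
  define \<kappa> where "\<kappa> = H / (1 + (R0 + 2*D0*T)\<^sup>2) powr \<beta>"
  define C where "C = exp (- (1 + ln (b*\<eta>/2)) / \<eta>)"
  define e where "e = exp (-(2*B) * T powr \<gamma>)"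
  have "exp (-2*\<kappa>*T) \<le> exp (- (2 * (H / ((1 + R0 + 2*D0)\<^sup>2) powr \<beta>)) * T powr (1 - 2*\<beta>))"
    using damping_time_product_lower_bound[of H \<beta> R0 "2*D0" T]
      assms H_nonneg \<beta>_nonneg R0_nonneg D0_nonneg
    by (simp add: \<kappa>_def mult.assoc)
  also have "\<dots> \<le> e"
    unfolding e_def using assms by (intro exp_neg_powr_le) auto
  finally have damped_term: "exp (-2*\<kappa>*T) \<le> e" .
  have "T \<le> C * exp ((b/2) * T powr \<eta>)"
    using le_exp_powr[of "b/2" \<eta> T] b_pos \<eta>_pos T_pos by (simp add: C_def)
  then have "T * exp (- b * T powr \<eta>) \<le> C * exp ((b/2) * T powr \<eta>) * exp (- b * T powr \<eta>)"
    by (rule mult_right_mono) simp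
  also have "\<dots> = C * exp (- (b/2) * T powr \<eta>)"
    by (simp add: mult.assoc exp_add[symmetric])
  also have "\<dots> \<le> C * e"
    unfolding e_def using assms by (intro mult_left_mono exp_neg_powr_le) (auto simp: C_def)
  finally have forced_term: "T * exp (- b * T powr \<eta>) \<le> C * e" .
  note energy_bound[folded \<kappa>_def]
  also have "D0\<^sup>2 * exp (-2*\<kappa>*T) + 2*D0*a * (T * exp (- b * T powr \<eta>)) \<le> D0\<^sup>2 * e + 2*D0*a * (C * e)"
    using damped_term forced_term a_nonneg D0_nonneg by (intro add_mono mult_left_mono) auto
  also have "\<dots> = (D0\<^sup>2 + 2*D0*a*C) * e"
    by (simp add: algebra_simps)
  finally have "norm (v T) \<le> sqrt ((D0\<^sup>2 + 2*D0*a*C) * e)"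
    by (rule real_le_rsqrt)
  also have "\<dots> = sqrt (D0\<^sup>2 + 2*D0*a*C) * exp (- B * T powr \<gamma>)"
  proof -
    have "e = (exp (- B * T powr \<gamma>))\<^sup>2"
      by (simp add: e_def power2_eq_square exp_add[symmetric])
    then show ?thesis
      by (simp add: real_sqrt_mult)
  qed
  finally show ?thesis
    by (simp add: C_def)
qed

lemma velocity_decay:
  assumes "0 \<le> B" and "B \<le> H / ((1 + R0 + 2*D0)\<^sup>2) powr \<beta>" and "B \<le> b/4"
    and "0 \<le> \<gamma>" and "\<gamma> \<le> 1 - 2*\<beta>" and "\<gamma> \<le> \<eta>"
  shows "norm (v T) \<le> sqrt (D0\<^sup>2 + 2*D0*a * exp (- (1 + ln (b*\<eta>/2)) / \<eta>)) * exp B * exp (- B * T powr \<gamma>)"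
    (is "_ \<le> ?S * exp B * _")
proof -
  have "D0 \<le> ?S"
    using a_nonneg D0_nonneg by (intro real_le_rsqrt) auto
  then have "0 \<le> ?S"
    using D0_nonneg by linarith
  show ?thesis
  proof (cases "T \<ge> 1")
    case True
    then have "norm (v T) \<le> ?S * exp (- B * T powr \<gamma>)"
      using assms by (intro velocity_decay_large_time)
    also have "\<dots> \<le> ?S * exp B * exp (- B * T powr \<gamma>)"
      using assms \<open>0 \<le> ?S\<close> by (intro mult_right_mono mult_le_cancel_left1[THEN iffD2]) auto
    finally show ?thesis .
  next
    case False
    have "norm (v T) \<le> D0"
      using speed T_pos by simp
    also have "\<dots> \<le> ?S"
      by fact
    also have "\<dots> \<le> ?S * exp (B - B * T powr \<gamma>)"
    proof -
      have "B * T powr \<gamma> \<le> B"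
        using False T_pos assms powr_le1[of \<gamma> T] by (simp add: mult_left_le)
      then show ?thesis
        using \<open>0 \<le> ?S\<close> by (simp add: mult_le_cancel_left1)
    qed
    finally show ?thesis
      by (simp add: mult.assoc exp_add[symmetric])
  qed
qed

end

theorem lemma3:
  fixes H \<beta> a b \<eta> \<delta> D0 R0 :: real
  assumes "H > 0" and "0 < \<beta>" and "\<beta> < 1/2" and "a > 0" and "b > 0"
    and "0 < \<eta>" and "\<eta> \<le> 1" and "D0 > 0" and "R0 \<ge> 0"
    and "\<eta> < 1 \<Longrightarrow> 0 < \<delta> \<and> \<delta> < \<eta>"
  defines "\<eta>m \<equiv> (if \<eta> < 1 then \<eta> - \<delta> else 1)"
  shows "\<exists>A B. A > 0 \<and> B > 0 \<and>
    (\<forall>T::real. \<forall>(v::real \<Rightarrow> real^3) (x::real \<Rightarrow> real^3)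
        (aT::real^3 \<Rightarrow> real \<Rightarrow> real) (\<epsilon>::real \<Rightarrow> real^3).
      T > 0 \<longrightarrow>
      (\<forall>t\<ge>0. (x has_vector_derivative v t) (at t within {0..})) \<longrightarrow>
      (\<forall>t\<ge>0. (v has_vector_derivative (- (aT (x t) t) *\<^sub>R v t + \<epsilon> t)) (at t within {0..})) \<longrightarrow>
      (\<forall>y t. t \<ge> 0 \<longrightarrow> aT y t \<ge> H / (1 + (norm y)\<^sup>2) powr \<beta>) \<longrightarrow>
      (\<forall>t\<ge>0. norm (\<epsilon> t) \<le> a * exp (- b * (t + T) powr \<eta>)) \<longrightarrow>
      (\<forall>t\<ge>0. norm (v t) \<le> D0) \<longrightarrow>
      norm (x 0) \<le> R0 + D0 * T \<longrightarrow>
      norm (v T) \<le> A * exp (- B * T powr (min (1 - 2*\<beta>) \<eta>m)))"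
proof -
  define B where "B = min (H / ((1 + R0 + 2*D0)\<^sup>2) powr \<beta>) (b/4)"
  define S where "S = sqrt (D0\<^sup>2 + 2*D0*a * exp (- (1 + ln (b*\<eta>/2)) / \<eta>))"
  define \<gamma> where "\<gamma> = min (1 - 2*\<beta>) \<eta>m"
  have "B > 0"
    using assms by (simp add: B_def add_pos_nonneg)
  have "B \<le> H / ((1 + R0 + 2*D0)\<^sup>2) powr \<beta>" "B \<le> b/4"
    unfolding B_def by (simp_all only: min.cobounded1 min.cobounded2)
  have "S > 0"
    using assms by (simp add: S_def add_pos_nonneg)
  have "0 \<le> \<gamma>" "\<gamma> \<le> 1 - 2*\<beta>" "\<gamma> \<le> \<eta>"
    using assms by (auto simp: \<gamma>_def \<eta>m_def)
  have decay: "norm (v T) \<le> S * exp B * exp (- B * T powr \<gamma>)"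
    if "damped_motion H \<beta> a b \<eta> D0 R0 T x v \<epsilon> aT"
    for T and x v \<epsilon> :: "real \<Rightarrow> real^3" and aT
    unfolding S_def
    by (rule damped_motion.velocity_decay[OF that])
      (use \<open>B > 0\<close> \<open>B \<le> H / ((1 + R0 + 2*D0)\<^sup>2) powr \<beta>\<close> \<open>B \<le> b/4\<close>
         \<open>0 \<le> \<gamma>\<close> \<open>\<gamma> \<le> 1 - 2*\<beta>\<close> \<open>\<gamma> \<le> \<eta>\<close> in auto)
  show ?thesis
    by (rule exI[of _ "S * exp B"], rule exI[of _ B],
        intro conjI allI impI decay[unfolded \<gamma>_def] damped_motion.intro)
      (use assms \<open>B > 0\<close> \<open>S > 0\<close> in auto)
qed

end
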